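(* Let $q_0>0$ and $\theta_+\in(0,\pi)$. Then $$q(x,t)=\frac{q_0e^{2iq_0^2t}\big[e^{i\theta_+}e^{2q_0x\sin\theta_+}+e^{-i\theta_+}e^{2q_0^2t\sin(2\theta_+)}\big]}{e^{2q_0x\sin\theta_+}+e^{2q_0^2t\sin(2\theta_+)}}$$ is a smooth solution on $\mathbb{R}^2$ of the nonlocal reverse space-time NLS equation $iq_t(x,t)=q_{xx}(x,t)-2q^2(x,t)q(-x,-t)$, and $q(x,t)\to q_0e^{i(2q_0^2t\pm\theta_+)}$ as $x\to\pm\infty$. *)

theory Defs
  imports "HOL-Analysis.Analysis"
begin

definition pdx :: "(real \<times> real \<Rightarrow> complex) \<Rightarrow> real \<times> real \<Rightarrow> complex" where
  "pdx (f :: real \<times> real \<Rightarrow> complex) = (\<lambda>(x,t). vector_derivative (\<lambda>y::real. f (y,t)) (at x))"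

definition pdt :: "(real \<times> real \<Rightarrow> complex) \<Rightarrow> real \<times> real \<Rightarrow> complex" where
  "pdt (f :: real \<times> real \<Rightarrow> complex) = (\<lambda>(x,t). vector_derivative (\<lambda>s::real. f (x,s)) (at t))"

fun iter_pd :: "bool list \<Rightarrow> (real \<times> real \<Rightarrow> complex) \<Rightarrow> real \<times> real \<Rightarrow> complex" where
  "iter_pd [] f = f"
| "iter_pd (b # bs) f = (if b then pdx else pdt) (iter_pd bs f)"

definition smooth_R2 :: "(real \<times> real \<Rightarrow> complex) \<Rightarrow> bool" where
  "smooth_R2 f \<longleftrightarrow> (\<forall>bs. continuous_on UNIV (iter_pd bs f) \<and>
      (\<forall>x t. (\<lambda>y. iter_pd bs f (y,t)) differentiable (at x) \<and>
             (\<lambda>s. iter_pd bs f (x,s)) differentiable (at t)))"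

definition qsol :: "real \<Rightarrow> real \<Rightarrow> real \<Rightarrow> real \<Rightarrow> complex" where
  "qsol q0 th x t =
     (of_real q0 * exp (\<i> * of_real (2 * q0^2 * t)) *
       (exp (\<i> * of_real th) * of_real (exp (2 * q0 * x * sin th)) + exp (- \<i> * of_real th) * of_real (exp (2 * q0^2 * t * sin (2 * th)))))
     / (of_real (exp (2 * q0 * x * sin th)) + of_real (exp (2 * q0^2 * t * sin (2 * th))))"

end

theory Submission
  imports Defs
begin

text \<open>
  The solution is a quotient N/D of finite sums of exponentials e^(u x + v t) whose denominator
  D = e^(A x) + e^(B t), with A = 2 q0 sin th and B = 2 q0^2 sin (2 th), never vanishes. Quotients
  N/D^n with fixed D are closed under both partial derivatives by the quotient rule, which gives
  smoothness. With E = e^(A x), F = e^(B t), P = e^(2 i q0^2 t) and u = 1/(E + F), the functions q,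
  q_t, q_xx and q(-x,-t) are polynomials in E, F, P, 1/P and u, and the equation becomes a polynomial
  identity modulo u (E + F) = 1 and sin^2 + cos^2 = 1. For the limits, q(., t) is e^(2 i q0^2 t)
  times a mean of e^(i th) and e^(-i th) weighted by e^(A x) and e^(B t), and e^(A x) tends to
  infinity or to 0 as x tends to +infinity or -infinity.
\<close>

type_synonym exp_terms = "(complex \<times> complex \<times> complex) list"

definition exp_sum :: "exp_terms \<Rightarrow> complex \<Rightarrow> complex \<Rightarrow> complex" where
  "exp_sum cs z w = sum_list (map (\<lambda>(k,u,v). k * exp (u * z + v * w)) cs)"

definition terms_dx :: "exp_terms \<Rightarrow> exp_terms" where
  "terms_dx = map (\<lambda>(k,u,v). (k * u, u, v))"

definition terms_dt :: "exp_terms \<Rightarrow> exp_terms" where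
  "terms_dt = map (\<lambda>(k,u,v). (k * v, u, v))"

definition terms_scale :: "complex \<Rightarrow> exp_terms \<Rightarrow> exp_terms" where
  "terms_scale c = map (\<lambda>(k,u,v). (c * k, u, v))"

definition terms_mult :: "exp_terms \<Rightarrow> exp_terms \<Rightarrow> exp_terms" where
  "terms_mult cs ds = concat (map (\<lambda>(k,u,v). map (\<lambda>(l,u',v'). (k * l, u + u', v + v')) ds) cs)"

lemma exp_sum_Nil [simp]: "exp_sum [] z w = 0"
  and exp_sum_Cons [simp]: "exp_sum ((k,u,v) # cs) z w = k * exp (u * z + v * w) + exp_sum cs z w"
  and exp_sum_append [simp]: "exp_sum (cs @ ds) z w = exp_sum cs z w + exp_sum ds z w"
  by (simp_all add: exp_sum_def)

lemma terms_dx_simps [simp]: "terms_dx [] = []" "terms_dx ((k,u,v) # cs) = (k * u, u, v) # terms_dx cs"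
  and terms_dt_simps [simp]: "terms_dt [] = []" "terms_dt ((k,u,v) # cs) = (k * v, u, v) # terms_dt cs"
  and terms_dx_append [simp]: "terms_dx (cs @ ds) = terms_dx cs @ terms_dx ds"
  by (simp_all add: terms_dx_def terms_dt_def)

lemma exp_sum_scale [simp]: "exp_sum (terms_scale c cs) z w = c * exp_sum cs z w"
  by (induction cs) (auto simp: terms_scale_def algebra_simps)

lemma exp_sum_mult [simp]: "exp_sum (terms_mult cs ds) z w = exp_sum cs z w * exp_sum ds z w"
proof (induction cs)
  case Nil
  then show ?case by (simp add: terms_mult_def)
next
  case (Cons c cs)
  obtain k u v where c: "c = (k, u, v)" by (cases c)
  have "exp_sum (map (\<lambda>(l,u',v'). (k * l, u + u', v + v')) ds) z w = k * exp (u * z + v * w) * exp_sum ds z w"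
    by (induction ds) (auto simp: algebra_simps exp_add)
  with Cons show ?case by (simp add: terms_mult_def c algebra_simps)
qed

lemma has_field_derivative_exp_sum_x:
  "((\<lambda>z. exp_sum cs z w) has_field_derivative exp_sum (terms_dx cs) z w) (at z)"
proof (induction cs)
  case (Cons c cs)
  obtain k u v where "c = (k, u, v)" by (cases c)
  with Cons show ?case
    unfolding exp_sum_Cons terms_dx_simps by (auto intro!: derivative_eq_intros)
qed simp

lemma has_field_derivative_exp_sum_t:
  "((\<lambda>w. exp_sum cs z w) has_field_derivative exp_sum (terms_dt cs) z w) (at w)"
proof (induction cs)
  case (Cons c cs)
  obtain k u v where "c = (k, u, v)" by (cases c)
  with Cons show ?case
    unfolding exp_sum_Cons terms_dt_simps by (auto intro!: derivative_eq_intros)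
qed simp

lemma exp_sum_dx_mult [simp]:
  "exp_sum (terms_dx (terms_mult cs ds)) z w
     = exp_sum (terms_dx cs) z w * exp_sum ds z w + exp_sum cs z w * exp_sum (terms_dx ds) z w"
  using DERIV_mult[OF has_field_derivative_exp_sum_x has_field_derivative_exp_sum_x]
  by (auto intro: DERIV_unique[OF has_field_derivative_exp_sum_x] simp: algebra_simps)

lemma terms_dx_scale [simp]: "terms_dx (terms_scale c cs) = terms_scale c (terms_dx cs)"
  by (simp add: terms_dx_def terms_scale_def case_prod_unfold algebra_simps)

lemma continuous_on_exp_sum:
  "continuous_on UNIV (\<lambda>p::real \<times> real. exp_sum cs (of_real (fst p)) (of_real (snd p)))"
  by (induction cs) (auto intro!: continuous_intros)

lemma DERIV_divide_power:
  fixes f d :: "'a :: real_normed_field \<Rightarrow> 'a"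
  assumes "(f has_field_derivative f') (at z)" "(d has_field_derivative d') (at z)" "d z \<noteq> 0"
  shows "((\<lambda>z. f z / d z ^ n) has_field_derivative (f' * d z - of_nat n * f z * d') / d z ^ Suc n) (at z)"
proof -
  have "((\<lambda>z. f z / d z ^ n) has_field_derivative
          (f' * d z ^ n - f z * (of_nat n * d z ^ (n - 1) * d')) / (d z ^ n * d z ^ n)) (at z)"
    using assms by (auto intro!: derivative_eq_intros)
  moreover have "(f' * d z ^ n - f z * (of_nat n * d z ^ (n - 1) * d')) / (d z ^ n * d z ^ n)
      = (f' * d z - of_nat n * f z * d') / d z ^ Suc n"
    using assms(3) by (cases n) (simp_all add: field_simps power2_eq_square)
  ultimately show ?thesis by simp
qed

definition exp_ratio :: "exp_terms \<Rightarrow> exp_terms \<Rightarrow> nat \<Rightarrow> real \<times> real \<Rightarrow> complex" where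
  "exp_ratio D N n = (\<lambda>(x,t). exp_sum N (of_real x) (of_real t) / exp_sum D (of_real x) (of_real t) ^ n)"

definition ratio_dx :: "exp_terms \<Rightarrow> exp_terms \<Rightarrow> nat \<Rightarrow> exp_terms" where
  "ratio_dx D N n = terms_mult (terms_dx N) D @ terms_scale (- of_nat n) (terms_mult N (terms_dx D))"

definition ratio_dt :: "exp_terms \<Rightarrow> exp_terms \<Rightarrow> nat \<Rightarrow> exp_terms" where
  "ratio_dt D N n = terms_mult (terms_dt N) D @ terms_scale (- of_nat n) (terms_mult N (terms_dt D))"

lemma exp_ratio_conv_inverse:
  "exp_ratio D N n (x, t) = exp_sum N (of_real x) (of_real t) * inverse (exp_sum D (of_real x) (of_real t)) ^ n"
  by (simp add: exp_ratio_def divide_inverse power_inverse)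

context
  fixes D :: exp_terms
  assumes D_nonzero: "\<And>x t. exp_sum D (of_real x) (of_real t) \<noteq> 0"
begin

lemma exp_ratio_has_vector_derivative_x:
  "((\<lambda>y. exp_ratio D N n (y, t)) has_vector_derivative exp_ratio D (ratio_dx D N n) (Suc n) (x, t)) (at x)"
proof -
  have "((\<lambda>z. exp_sum N z (of_real t) / exp_sum D z (of_real t) ^ n) has_field_derivative
          exp_ratio D (ratio_dx D N n) (Suc n) (x, t)) (at (of_real x))"
    using DERIV_divide_power[OF has_field_derivative_exp_sum_x has_field_derivative_exp_sum_x D_nonzero]
    by (simp add: exp_ratio_def ratio_dx_def algebra_simps)
  from has_vector_derivative_real_field[OF this] show ?thesis
    by (simp add: exp_ratio_def)
qed

lemma exp_ratio_has_vector_derivative_t: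
  "((\<lambda>s. exp_ratio D N n (x, s)) has_vector_derivative exp_ratio D (ratio_dt D N n) (Suc n) (x, t)) (at t)"
proof -
  have "((\<lambda>z. exp_sum N (of_real x) z / exp_sum D (of_real x) z ^ n) has_field_derivative
          exp_ratio D (ratio_dt D N n) (Suc n) (x, t)) (at (of_real t))"
    using DERIV_divide_power[OF has_field_derivative_exp_sum_t has_field_derivative_exp_sum_t D_nonzero]
    by (simp add: exp_ratio_def ratio_dt_def algebra_simps)
  from has_vector_derivative_real_field[OF this] show ?thesis
    by (simp add: exp_ratio_def)
qed

lemma pdx_exp_ratio: "pdx (exp_ratio D N n) = exp_ratio D (ratio_dx D N n) (Suc n)"
  by (auto simp: pdx_def fun_eq_iff intro!: vector_derivative_at exp_ratio_has_vector_derivative_x)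

lemma pdt_exp_ratio: "pdt (exp_ratio D N n) = exp_ratio D (ratio_dt D N n) (Suc n)"
  by (auto simp: pdt_def fun_eq_iff intro!: vector_derivative_at exp_ratio_has_vector_derivative_t)

lemma iter_pd_exp_ratio: "\<exists>N' n'. iter_pd bs (exp_ratio D N n) = exp_ratio D N' n'"
proof (induction bs)
  case (Cons b bs)
  then obtain N' n' where "iter_pd bs (exp_ratio D N n) = exp_ratio D N' n'" by blast
  then show ?case by (auto simp: pdx_exp_ratio pdt_exp_ratio)
qed auto

lemma smooth_R2_exp_ratio: "smooth_R2 (exp_ratio D N n)"
  unfolding smooth_R2_def
proof (intro allI conjI)
  fix bs x t
  obtain N' n' where iter: "iter_pd bs (exp_ratio D N n) = exp_ratio D N' n'"
    using iter_pd_exp_ratio by blast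
  have "continuous_on UNIV (\<lambda>p::real \<times> real. exp_sum N' (of_real (fst p)) (of_real (snd p)) /
          exp_sum D (of_real (fst p)) (of_real (snd p)) ^ n')"
    by (intro continuous_intros continuous_on_exp_sum) (simp add: D_nonzero)
  then show "continuous_on UNIV (iter_pd bs (exp_ratio D N n))"
    unfolding iter unfolding exp_ratio_def case_prod_unfold .
  show "(\<lambda>y. iter_pd bs (exp_ratio D N n) (y, t)) differentiable at x"
    unfolding iter using exp_ratio_has_vector_derivative_x
    by (blast intro: differentiableI_vector)
  show "(\<lambda>s. iter_pd bs (exp_ratio D N n) (x, s)) differentiable at t"
    unfolding iter using exp_ratio_has_vector_derivative_t
    by (blast intro: differentiableI_vector)
qed

end

text \<open>
  For S = sin th and C = cos th these are the denominator and numerator of qsol: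
  4 q0^2 S C = 2 q0^2 sin (2 th) and C \<plusminus> i S = e^(\<plusminus> i th).
\<close>

definition soliton_den :: "real \<Rightarrow> real \<Rightarrow> real \<Rightarrow> exp_terms" where
  "soliton_den q0 S C = [(1, of_real (2 * q0 * S), 0), (1, 0, of_real (4 * q0^2 * S * C))]"

definition soliton_num :: "real \<Rightarrow> real \<Rightarrow> real \<Rightarrow> exp_terms" where
  "soliton_num q0 S C =
     [(of_real q0 * (of_real C + \<i> * of_real S), of_real (2 * q0 * S), \<i> * of_real (2 * q0^2)),
      (of_real q0 * (of_real C - \<i> * of_real S), 0, of_real (4 * q0^2 * S * C) + \<i> * of_real (2 * q0^2))]"

lemma exp_sum_soliton_den_nonzero: "exp_sum (soliton_den q0 S C) (of_real x) (of_real t) \<noteq> 0"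
proof -
  have "exp_sum (soliton_den q0 S C) (of_real x) (of_real t) = of_real (exp (2 * q0 * S * x) + exp (4 * q0^2 * S * C * t))"
    by (simp add: soliton_den_def of_real_exp)
  moreover have "exp (2 * q0 * S * x) + exp (4 * q0^2 * S * C * t) > 0"
    by (intro add_pos_pos) auto
  ultimately show ?thesis by (metis less_irrefl of_real_eq_0_iff)
qed

lemma soliton_solves_nls:
  fixes q0 S C x t :: real
  assumes "S^2 + C^2 = 1"
  defines "q \<equiv> exp_ratio (soliton_den q0 S C) (soliton_num q0 S C) 1"
  shows "\<i> * pdt q (x, t) = pdx (pdx q) (x, t) - 2 * q (x, t)^2 * q (-x, -t)"
proof -
  define A where "A = 2 * q0 * S"
  define B where "B = 4 * q0^2 * S * C"
  define W where "W = 2 * q0^2"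
  define \<alpha> where "\<alpha> = of_real C + \<i> * of_real S"
  define \<beta> where "\<beta> = of_real C - \<i> * of_real S"
  define E where "E = exp (of_real A * of_real x :: complex)"
  define F where "F = exp (of_real B * of_real t :: complex)"
  define P where "P = exp (\<i> * of_real W * of_real t :: complex)"
  have nz: "E + F \<noteq> 0" "E \<noteq> 0" "F \<noteq> 0" "P \<noteq> 0"
    using exp_sum_soliton_den_nonzero[of q0 S C x t] by (auto simp: E_def F_def P_def A_def B_def soliton_den_def)
  \<comment> \<open>With u in place of 1/(E + F) each step below is a polynomial identity modulo u (E + F) = 1.\<close>
  define u where "u = inverse (E + F)"
  have u: "u * (E + F) = 1"
    using nz by (simp add: u_def)
  note unfold_soliton = exp_ratio_conv_inverse ratio_dx_def ratio_dt_def soliton_den_def soliton_num_def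
    A_def[symmetric] B_def[symmetric] W_def[symmetric] \<alpha>_def[symmetric] \<beta>_def[symmetric]
  have q: "q (x, t) = of_real q0 * P * (\<alpha> * E + \<beta> * F) * u"
    unfolding q_def unfold_soliton by (simp add: exp_add distrib_right E_def F_def P_def u_def algebra_simps)
  have qt: "\<i> * pdt q (x, t) = - W * q (x, t) + \<i> * of_real (q0 * B) * (\<beta> - \<alpha>) * P * E * F * u^2"
    unfolding q q_def pdt_exp_ratio[OF exp_sum_soliton_den_nonzero] unfolding unfold_soliton
    apply (simp add: exp_add distrib_right flip: E_def F_def P_def)
    apply (simp flip: u_def)
    using u i_squared by algebra
  have qxx: "pdx (pdx q) (x, t) = of_real (q0 * A^2) * (\<alpha> - \<beta>) * P * E * F * (F - E) * u^3"
    unfolding q_def pdx_exp_ratio[OF exp_sum_soliton_den_nonzero] unfolding unfold_soliton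
    apply (simp add: exp_add distrib_right flip: E_def F_def P_def)
    apply (simp add: power3_eq_cube power2_eq_square flip: u_def)
    by algebra
  have q_reflected: "q (-x, -t) = of_real q0 * (\<alpha> * F + \<beta> * E) * inverse P * u"
  proof -
    have "inverse (inverse E + inverse F) = E * F * u"
      using nz by (simp add: u_def field_simps)
    then show ?thesis
      unfolding q_def unfold_soliton
      apply (simp add: exp_add exp_diff distrib_right exp_minus divide_inverse flip: E_def F_def P_def)
      using u right_inverse[OF nz(2)] right_inverse[OF nz(3)] by algebra
  qed
  have sc: "of_real S ^ 2 + of_real C ^ 2 = (1 :: complex)"
    by (metis assms(1) of_real_1 of_real_add of_real_power)
  show ?thesis
    unfolding qt qxx q_reflected unfolding q \<alpha>_def \<beta>_def A_def B_def W_def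
    using u right_inverse[OF nz(4)] sc i_squared
    by (simp only: of_real_minus of_real_mult of_real_power of_real_numeral) algebra
qed

lemma qsol_eq_exp_ratio:
  "qsol q0 th x t = exp_ratio (soliton_den q0 (sin th) (cos th)) (soliton_num q0 (sin th) (cos th)) 1 (x, t)"
proof -
  have "exp (\<i> * of_real \<phi>) = of_real (cos \<phi>) + \<i> * of_real (sin \<phi>)" for \<phi>
    by (simp flip: cis_conv_exp add: complex_eq_iff)
  from this[of th] this[of "-th"] show ?thesis
    unfolding qsol_def sin_double
    by (simp add: exp_ratio_def soliton_den_def soliton_num_def
        exp_add distrib_left distrib_right of_real_exp mult_ac)
qed

lemma tendsto_exp_weighted_mean:
  fixes a b :: complex and A F :: real
  assumes "A > 0" "F > 0"
  defines "m \<equiv> \<lambda>x. (a * of_real (exp (A * x)) + b * of_real F) / (of_real (exp (A * x)) + of_real F)"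
  shows "(m \<longlongrightarrow> a) at_top" and "(m \<longlongrightarrow> b) at_bot"
proof -
  define w where "w x = F / (F + exp (A * x))" for x
  have m: "m = (\<lambda>x. a + (b - a) * of_real (w x))"
  proof
    fix x
    have "exp (A * x) + F \<noteq> 0"
      using assms(2) by (metis add_pos_pos exp_gt_zero less_irrefl)
    then have "of_real (exp (A * x)) + of_real F \<noteq> (0 :: complex)"
      by (metis of_real_add of_real_eq_0_iff)
    then show "m x = a + (b - a) * of_real (w x)"
      by (simp add: m_def w_def field_simps of_real_divide)
  qed
  have "filterlim (\<lambda>x. F + exp (A * x)) at_top at_top"
    by (intro filterlim_tendsto_add_at_top[OF tendsto_const] filterlim_compose[OF exp_at_top]
        filterlim_tendsto_pos_mult_at_top[OF tendsto_const assms(1) filterlim_ident])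
  then have w_top: "(w \<longlongrightarrow> 0) at_top"
    unfolding w_def by (intro tendsto_divide_0[OF tendsto_const] filterlim_at_top_imp_at_infinity)
  have "filterlim (\<lambda>x. A * x) at_bot at_bot"
    by (rule filterlim_tendsto_pos_mult_at_bot[OF tendsto_const assms(1) filterlim_ident])
  then have "((\<lambda>x. exp (A * x)) \<longlongrightarrow> 0) at_bot"
    by (rule filterlim_compose[OF exp_at_bot])
  then have "(w \<longlongrightarrow> F / (F + 0)) at_bot"
    unfolding w_def using assms(2) by (intro tendsto_intros) auto
  then have w_bot: "(w \<longlongrightarrow> 1) at_bot"
    using assms(2) by simp
  show "(m \<longlongrightarrow> a) at_top" "(m \<longlongrightarrow> b) at_bot"
    unfolding m using w_top w_bot by (auto intro!: tendsto_eq_intros)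
qed

lemma qsol_tendsto:
  fixes q0 th t :: real
  assumes "q0 > 0" "sin th > 0"
  shows "((\<lambda>x. qsol q0 th x t) \<longlongrightarrow> q0 * exp (\<i> * (2 * q0^2 * t + th))) at_top"
    and "((\<lambda>x. qsol q0 th x t) \<longlongrightarrow> q0 * exp (\<i> * (2 * q0^2 * t - th))) at_bot"
proof -
  define c where "c = of_real q0 * exp (\<i> * of_real (2 * q0^2 * t))"
  define A where "A = 2 * q0 * sin th"
  define F where "F = exp (2 * q0^2 * t * sin (2 * th))"
  define m where "m = (\<lambda>x. (exp (\<i> * of_real th) * of_real (exp (A * x)) + exp (- \<i> * of_real th) * of_real F)
                          / (of_real (exp (A * x)) + of_real F))"
  have qsol: "(\<lambda>x. qsol q0 th x t) = (\<lambda>x. c * m x)"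
    by (simp add: fun_eq_iff qsol_def c_def m_def A_def F_def mult_ac)
  have "A > 0" "F > 0"
    using assms by (simp_all add: A_def F_def)
  note lim = tendsto_exp_weighted_mean[where a = "exp (\<i> * of_real th)" and b = "exp (- \<i> * of_real th)",
      OF this, folded m_def]
  have "c * exp (\<i> * of_real th) = q0 * exp (\<i> * (2 * q0^2 * t + th))"
    and "c * exp (- \<i> * of_real th) = q0 * exp (\<i> * (2 * q0^2 * t - th))"
    by (simp_all add: c_def algebra_simps flip: exp_add)
  with tendsto_mult_left[OF lim(1), of c] tendsto_mult_left[OF lim(2), of c]
  show "((\<lambda>x. qsol q0 th x t) \<longlongrightarrow> q0 * exp (\<i> * (2 * q0^2 * t + th))) at_top"
    and "((\<lambda>x. qsol q0 th x t) \<longlongrightarrow> q0 * exp (\<i> * (2 * q0^2 * t - th))) at_bot"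
    unfolding qsol by simp_all
qed

theorem mainTheorem11:
  fixes q0 th :: real
  assumes "q0 > 0" and "0 < th" and "th < pi"
  shows "smooth_R2 (\<lambda>(x,t). qsol q0 th x t)
    \<and> (\<forall>x t. \<i> * pdt (\<lambda>(x,t). qsol q0 th x t) (x,t)
              = pdx (pdx (\<lambda>(x,t). qsol q0 th x t)) (x,t)
                - 2 * (qsol q0 th x t)^2 * qsol q0 th (-x) (-t))
    \<and> (\<forall>t. ((\<lambda>x. qsol q0 th x t) \<longlongrightarrow> q0 * exp (\<i> * (2 * q0^2 * t + th))) at_top)
    \<and> (\<forall>t. ((\<lambda>x. qsol q0 th x t) \<longlongrightarrow> q0 * exp (\<i> * (2 * q0^2 * t - th))) at_bot)"
proof (intro conjI allI)
  have q: "(\<lambda>(x, t). qsol q0 th x t) = exp_ratio (soliton_den q0 (sin th) (cos th)) (soliton_num q0 (sin th) (cos th)) 1"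
    by (simp add: fun_eq_iff qsol_eq_exp_ratio)
  show "smooth_R2 (\<lambda>(x, t). qsol q0 th x t)"
    unfolding q by (rule smooth_R2_exp_ratio[OF exp_sum_soliton_den_nonzero])
  show "\<i> * pdt (\<lambda>(x, t). qsol q0 th x t) (x, t)
          = pdx (pdx (\<lambda>(x, t). qsol q0 th x t)) (x, t) - 2 * (qsol q0 th x t)^2 * qsol q0 th (-x) (-t)" for x t
    unfolding q unfolding qsol_eq_exp_ratio by (rule soliton_solves_nls) simp
  have "sin th > 0"
    using assms by (simp add: sin_gt_zero)
  then show "((\<lambda>x. qsol q0 th x t) \<longlongrightarrow> q0 * exp (\<i> * (2 * q0^2 * t + th))) at_top"
    and "((\<lambda>x. qsol q0 th x t) \<longlongrightarrow> q0 * exp (\<i> * (2 * q0^2 * t - th))) at_bot" for t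
    using qsol_tendsto assms(1) by blast+
qed

end
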